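(* Let $\{\mathcal{T}^*_n\}_{n\ge K}$ be a $K$-type Community Modulated Preferential Attachment tree with parameters $p_i$, $q_{ij}$, $\alpha_{ij}$, and for $k\ge0$ let $N_k(n)$ be the number of vertices of out-degree $k$ in $\mathcal{T}^*_n$. Let $p_i^*=\sum_{j=1}^K p_jq_{ji}$, $$\nu_{ji}=\frac{p_jq_{ji}}{\alpha_{ji}p_i+p_i^*},\qquad \nu_i=\sum_{j=1}^K\nu_{ji},\qquad \alpha_i=\frac{\sum_{j=1}^K\nu_{ji}\alpha_{ji}}{\nu_i}.$$ Then for each fixed $k$, $N_k(n)/n\to c_k^*$ in probability as $n\to\infty$, where $$c_k^*=\sum_{i=1}^K\frac{p_i}{\nu_i}\,\frac{\Gamma(k+\alpha_i)\,\Gamma(1/\nu_i+\alpha_i)}{\Gamma(\alpha_i)\,\Gamma(k+1+1/\nu_i+\alpha_i)},$$ $\Gamma$ is the gamma function, and when $p_i^*=0$ the $i$-th term of $c_k^*$ is interpreted as $p_i$ if $k=0$ and $0$ otherwise.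
   Context: $K$-type Community Modulated Preferential Attachment (CMPA) tree: fix $K\ge 2$, a probability vector $(p_1,\dots,p_K)$ with $p_1=\max_i p_i>0$, numbers $q_{ij}\ge0$ with $\sum_j q_{ij}=1$ for each $i$, and positive numbers $\alpha_{ij}$. The initial tree $\mathcal{T}^*_K$ is a uniform random recursive tree on vertices $\{1,\dots,K\}$ whose vertices are assigned types $1,\dots,K$ via a uniform random permutation (one vertex of each type). For $n>K$, vertex $n$ is added to $\mathcal{T}^*_{n-1}$: (1) it is assigned type $i$ with probability $p_i$; (2) given type $i$, it chooses to connect to type $j$ with probability $q_{ij}$; (3) it connects to an existing type $j$ vertex $v$ with probability proportional to $D_v+\alpha_{ij}$ (normalized over all existing type $j$ vertices), where $D_v$ is the current out-degree (number of children) of $v$. All random choices are independent. *)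

theory Defs
  imports "HOL-Probability.Probability" "HOL-Analysis.Gamma_Function"
begin

text \<open>Conventions: types are 0..K-1 (paper type t+1 is type t here); vertices of the
tree with n vertices are 0..n-1 (paper vertex v+1 is vertex v here). A tree state is a
list whose v-th entry is (type of v, parent of v), the parent being None for the root.\<close>

type_synonym cmpa_state = "(nat \<times> nat option) list"

definition vtype :: "cmpa_state \<Rightarrow> nat \<Rightarrow> nat" where
  "vtype s v = fst (s ! v)"

definition outdeg :: "cmpa_state \<Rightarrow> nat \<Rightarrow> nat" where
  "outdeg s v = card {w. w < length s \<and> snd (s ! w) = Some v}"

fun urrt :: "nat \<Rightarrow> nat option list pmf" where
  "urrt 0 = return_pmf []"
| "urrt (Suc m) = do {
     ps \<leftarrow> urrt m;
     par \<leftarrow> (if m = 0 then return_pmf None else map_pmf Some (pmf_of_set {..<m}));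
     return_pmf (ps @ [par]) }"

definition cmpa_init :: "nat \<Rightarrow> cmpa_state pmf" where
  "cmpa_init K = do {
     \<sigma> \<leftarrow> pmf_of_set {\<sigma>. \<sigma> permutes {..<K}};
     ps \<leftarrow> urrt K;
     return_pmf (map (\<lambda>m. (\<sigma> m, ps ! m)) [0..<K]) }"

definition cmpa_target ::
  "(nat \<Rightarrow> nat \<Rightarrow> real) \<Rightarrow> cmpa_state \<Rightarrow> nat \<Rightarrow> nat \<Rightarrow> nat pmf" where
  "cmpa_target \<alpha> s i j =
     (let vs = filter (\<lambda>v. vtype s v = j) [0..<length s];
          W = (\<Sum>v\<leftarrow>vs. real (outdeg s v) + \<alpha> i j)
      in pmf_of_list (map (\<lambda>v. (v, (real (outdeg s v) + \<alpha> i j) / W)) vs))"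

definition cmpa_step ::
  "nat \<Rightarrow> (nat \<Rightarrow> real) \<Rightarrow> (nat \<Rightarrow> nat \<Rightarrow> real) \<Rightarrow> (nat \<Rightarrow> nat \<Rightarrow> real)
   \<Rightarrow> cmpa_state \<Rightarrow> cmpa_state pmf" where
  "cmpa_step K p q \<alpha> s = do {
     i \<leftarrow> pmf_of_list (map (\<lambda>t. (t, p t)) [0..<K]);
     j \<leftarrow> pmf_of_list (map (\<lambda>t. (t, q i t)) [0..<K]);
     v \<leftarrow> cmpa_target \<alpha> s i j;
     return_pmf (s @ [(i, Some v)]) }"

definition cmpa_tree ::
  "nat \<Rightarrow> (nat \<Rightarrow> real) \<Rightarrow> (nat \<Rightarrow> nat \<Rightarrow> real) \<Rightarrow> (nat \<Rightarrow> nat \<Rightarrow> real)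
   \<Rightarrow> nat \<Rightarrow> cmpa_state pmf" where
  "cmpa_tree K p q \<alpha> n = ((\<lambda>M. bind_pmf M (cmpa_step K p q \<alpha>)) ^^ (n - K)) (cmpa_init K)"

definition deg_count :: "nat \<Rightarrow> cmpa_state \<Rightarrow> nat" where
  "deg_count k s = card {v. v < length s \<and> outdeg s v = k}"

definition p_star :: "nat \<Rightarrow> (nat \<Rightarrow> real) \<Rightarrow> (nat \<Rightarrow> nat \<Rightarrow> real) \<Rightarrow> nat \<Rightarrow> real" where
  "p_star K p q i = (\<Sum>j<K. p j * q j i)"

definition nu2 :: "nat \<Rightarrow> (nat \<Rightarrow> real) \<Rightarrow> (nat \<Rightarrow> nat \<Rightarrow> real) \<Rightarrow> (nat \<Rightarrow> nat \<Rightarrow> real)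
   \<Rightarrow> nat \<Rightarrow> nat \<Rightarrow> real" where
  "nu2 K p q \<alpha> j i = p j * q j i / (\<alpha> j i * p i + p_star K p q i)"

definition nu1 :: "nat \<Rightarrow> (nat \<Rightarrow> real) \<Rightarrow> (nat \<Rightarrow> nat \<Rightarrow> real) \<Rightarrow> (nat \<Rightarrow> nat \<Rightarrow> real)
   \<Rightarrow> nat \<Rightarrow> real" where
  "nu1 K p q \<alpha> i = (\<Sum>j<K. nu2 K p q \<alpha> j i)"

definition alpha1 :: "nat \<Rightarrow> (nat \<Rightarrow> real) \<Rightarrow> (nat \<Rightarrow> nat \<Rightarrow> real) \<Rightarrow> (nat \<Rightarrow> nat \<Rightarrow> real)
   \<Rightarrow> nat \<Rightarrow> real" where
  "alpha1 K p q \<alpha> i = (\<Sum>j<K. nu2 K p q \<alpha> j i * \<alpha> j i) / nu1 K p q \<alpha> i"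

definition c_star :: "nat \<Rightarrow> (nat \<Rightarrow> real) \<Rightarrow> (nat \<Rightarrow> nat \<Rightarrow> real) \<Rightarrow> (nat \<Rightarrow> nat \<Rightarrow> real)
   \<Rightarrow> nat \<Rightarrow> real" where
  "c_star K p q \<alpha> k = (\<Sum>i<K.
     if p_star K p q i = 0 then (if k = 0 then p i else 0)
     else (let n = nu1 K p q \<alpha> i; a = alpha1 K p q \<alpha> i in
       p i / n * (Gamma (real k + a) * Gamma (1 / n + a))
         / (Gamma a * Gamma (real k + 1 + 1 / n + a))))"

end

theory Submission
  imports Defs
begin

text \<open>
Split the vertices by type. For a type t write T_t, E_t and N_{t,k} for the number of type-t
vertices, their total out-degree, and the number of type-t vertices of out-degree k. In one step
T_t and E_t grow by p_t and p*_t in expectation, so both are linear up to an error that is o(n)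
in L^1. Hence the weight S_{it} = E_t + \<alpha>_{it} T_t that a type-i newcomer sees on type t is
n \<sigma>_{it} + o(n), where \<sigma>_{it} = \<alpha>_{it} p_t + p*_t. Up to this error the expected increment
of N_{t,k} is [k = 0] p_t + (b_{k-1} N_{t,k-1} - b_k N_{t,k}) / n with
b_k = \<Sum>_i \<nu>_{it} (k + \<alpha>_{it}), which pulls N_{t,k} towards n c_{t,k} for the solution of
c_{t,k} (1 + b_k) = [k = 0] p_t + b_{k-1} c_{t,k-1}. A process y with bounded increments and
y E[\<Delta>y] \<le> o(n) has E y^2 = o(n^2); by induction on k this gives
E |N_{t,k} - n c_{t,k}| = o(n), and Markov's inequality gives convergence in probability.
Finally b_k = \<nu>_t (k + \<alpha>_t), so Gamma (x + 1) = x Gamma x solves the recursion, and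
\<Sum>_t c_{t,k} = c*_k.
\<close>

lemma pmf_expectation_mono_finite:
  fixes f g :: "'a \<Rightarrow> real"
  assumes "finite (set_pmf N)" "\<And>x. x \<in> set_pmf N \<Longrightarrow> f x \<le> g x"
  shows "measure_pmf.expectation N f \<le> measure_pmf.expectation N g"
  using assms by (intro integral_mono_AE integrable_measure_pmf_finite AE_pmfI) auto

lemma pmf_expectation_const: "measure_pmf.expectation N (\<lambda>x. c) = (c::real)"
  by (simp add: measure_pmf.prob_space)

lemma pmf_expectation_add_finite:
  "finite (set_pmf N) \<Longrightarrow> measure_pmf.expectation N (\<lambda>x. f x + g x) =
     measure_pmf.expectation N f + measure_pmf.expectation N (g :: _ \<Rightarrow> real)"
  by (rule Bochner_Integration.integral_add) (auto intro: integrable_measure_pmf_finite)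

lemma pmf_expectation_diff_finite:
  "finite (set_pmf N) \<Longrightarrow> measure_pmf.expectation N (\<lambda>x. f x - g x) =
     measure_pmf.expectation N f - measure_pmf.expectation N (g :: _ \<Rightarrow> real)"
  by (rule Bochner_Integration.integral_diff) (auto intro: integrable_measure_pmf_finite)

lemma pmf_expectation_sum_finite:
  "finite (set_pmf N) \<Longrightarrow> finite A \<Longrightarrow> measure_pmf.expectation N (\<lambda>x. \<Sum>i\<in>A. f i x) =
     (\<Sum>i\<in>A. measure_pmf.expectation N (f i :: _ \<Rightarrow> real))"
  by (rule Bochner_Integration.integral_sum) (auto intro: integrable_measure_pmf_finite)

lemma pmf_expectation_abs_le_second_moment:
  fixes y :: "'a \<Rightarrow> real"
  assumes fin: "finite (set_pmf N)" and c: "c > 0"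
  shows "measure_pmf.expectation N (\<lambda>x. \<bar>y x\<bar>)
    \<le> (measure_pmf.expectation N (\<lambda>x. (y x)\<^sup>2) / c + c) / 2"
proof -
  have amgm: "\<bar>y x\<bar> \<le> ((y x)\<^sup>2 / c + c) / 2" for x
  proof -
    have "0 \<le> (\<bar>y x\<bar> - c)\<^sup>2" by simp
    then show ?thesis using c by (simp add: field_simps power2_eq_square)
  qed
  have "measure_pmf.expectation N (\<lambda>x. \<bar>y x\<bar>) \<le> measure_pmf.expectation N (\<lambda>x. ((y x)\<^sup>2 / c + c) / 2)"
    by (rule pmf_expectation_mono_finite[OF fin amgm])
  also have "\<dots> = (measure_pmf.expectation N (\<lambda>x. (y x)\<^sup>2) / c + c) / 2"
    using fin by (simp add: pmf_expectation_add_finite pmf_expectation_const integral_divide_zero)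
  finally show ?thesis .
qed

lemma pmf_of_list_weights_wf:
  assumes "\<forall>x\<in>set xs. w x \<ge> 0" "sum_list (map w xs) = 1"
  shows "pmf_of_list_wf (map (\<lambda>x. (x, w x)) xs)"
  using assms by (intro pmf_of_list_wfI) (auto simp: o_def)

lemma set_pmf_of_list_weights:
  assumes "\<forall>x\<in>set xs. w x \<ge> 0" "sum_list (map w xs) = 1"
  shows "set_pmf (pmf_of_list (map (\<lambda>x. (x, w x)) xs)) \<subseteq> set xs"
  using set_pmf_of_list[OF pmf_of_list_weights_wf[OF assms]] by auto

lemma pmf_pmf_of_list_weights:
  assumes "distinct xs" "\<forall>x\<in>set xs. w x \<ge> 0" "sum_list (map w xs) = 1"
  shows "pmf (pmf_of_list (map (\<lambda>x. (x, w x)) xs)) a = (if a \<in> set xs then w a else 0)"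
proof -
  have "pmf (pmf_of_list (map (\<lambda>x. (x, w x)) xs)) a = sum_list (map w (filter (\<lambda>x. x = a) xs))"
    by (simp add: pmf_pmf_of_list[OF pmf_of_list_weights_wf[OF assms(2,3)]] filter_map o_def)
  also have "\<dots> = sum w (set (filter (\<lambda>x. x = a) xs))"
    using assms(1) by (simp add: sum_list_distinct_conv_sum_set)
  also have "set (filter (\<lambda>x. x = a) xs) = (if a \<in> set xs then {a} else {})" by auto
  finally show ?thesis by simp
qed

lemma pmf_expectation_bind_pmf_of_list_weights:
  fixes h :: "'b \<Rightarrow> real"
  assumes "distinct xs" "\<forall>x\<in>set xs. w x \<ge> 0" "sum_list (map w xs) = 1"
    and "\<And>x. x \<in> set xs \<Longrightarrow> finite (set_pmf (f x))"
  shows "measure_pmf.expectation (pmf_of_list (map (\<lambda>x. (x, w x)) xs) \<bind> f) h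
         = (\<Sum>x\<in>set xs. w x * measure_pmf.expectation (f x) h)"
  using assms set_pmf_of_list_weights[OF assms(2,3)]
  by (subst pmf_expectation_bind[of "set xs"]) (auto simp: pmf_pmf_of_list_weights intro!: sum.cong)

lemma finite_set_pmf_bind_pmf_of_list_weights:
  assumes "\<forall>x\<in>set xs. w x \<ge> 0" "sum_list (map w xs) = 1"
    and "\<And>x. x \<in> set xs \<Longrightarrow> finite (set_pmf (f x))"
  shows "finite (set_pmf (pmf_of_list (map (\<lambda>x. (x, w x)) xs) \<bind> f))"
proof -
  have "finite (set_pmf (pmf_of_list (map (\<lambda>x. (x, w x)) xs)))"
    using set_pmf_of_list_weights[OF assms(1,2)] by (rule finite_subset) simp
  then show ?thesis
    using assms(3) set_pmf_of_list_weights[OF assms(1,2)] by (auto intro!: finite_UN_I)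
qed

lemma sum_list_upt_eq_sum: "sum_list (map f [0..<n]) = (\<Sum>i<n. f i)"
  by (simp add: sum_list_distinct_conv_sum_set atLeast0LessThan)

section \<open>Sublinear sequences\<close>

definition sublinear :: "(nat \<Rightarrow> real) \<Rightarrow> bool" where
  "sublinear f \<longleftrightarrow> (\<forall>e>0. eventually (\<lambda>n. f n \<le> e * real n) sequentially)"

lemma sublinear_const: "sublinear (\<lambda>_. c)"
  unfolding sublinear_def
proof (intro allI impI)
  fix e :: real assume e: "e > 0"
  obtain N :: nat where "c / e \<le> real N" using real_arch_simple by blast
  then have "c \<le> e * real n" if "N \<le> n" for n
  proof -
    have "c \<le> e * real N" using \<open>c / e \<le> real N\<close> e by (simp add: field_simps)
    also have "\<dots> \<le> e * real n" using that e by simp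
    finally show ?thesis .
  qed
  then show "eventually (\<lambda>n. c \<le> e * real n) sequentially"
    using eventually_sequentially by blast
qed

lemma sublinear_add: "sublinear f \<Longrightarrow> sublinear g \<Longrightarrow> sublinear (\<lambda>n. f n + g n)"
  unfolding sublinear_def
proof (intro allI impI)
  fix e :: real assume "\<forall>e>0. eventually (\<lambda>n. f n \<le> e * real n) sequentially"
    "\<forall>e>0. eventually (\<lambda>n. g n \<le> e * real n) sequentially" "e > 0"
  then have "eventually (\<lambda>n. f n \<le> e/2 * real n) sequentially"
    "eventually (\<lambda>n. g n \<le> e/2 * real n) sequentially"
    by (meson half_gt_zero)+
  then show "eventually (\<lambda>n. f n + g n \<le> e * real n) sequentially"
    by eventually_elim (simp add: field_simps)
qed

lemma sublinear_cmult:
  assumes f: "sublinear f" and c: "c \<ge> 0"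
  shows "sublinear (\<lambda>n. c * f n)"
  unfolding sublinear_def
proof (intro allI impI)
  fix e :: real assume e: "e > 0"
  have "e / (c + 1) > 0" using e c by simp
  then have "eventually (\<lambda>n. f n \<le> e / (c + 1) * real n) sequentially"
    using f unfolding sublinear_def by blast
  then show "eventually (\<lambda>n. c * f n \<le> e * real n) sequentially"
  proof eventually_elim
    case (elim n)
    have "c * f n \<le> c * (e / (c + 1) * real n)" using elim c by (rule mult_left_mono)
    also have "\<dots> \<le> e * real n"
      using c e by (simp add: field_simps mult_left_mono)
    finally show ?case .
  qed
qed

lemma sublinear_mono:
  "sublinear g \<Longrightarrow> eventually (\<lambda>n. f n \<le> g n) sequentially \<Longrightarrow> sublinear f"
  unfolding sublinear_def
proof (intro allI impI)
  fix e :: real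
  assume "\<forall>e>0. eventually (\<lambda>n. g n \<le> e * real n) sequentially" "e > 0"
    and "eventually (\<lambda>n. f n \<le> g n) sequentially"
  then have "eventually (\<lambda>n. g n \<le> e * real n) sequentially" "eventually (\<lambda>n. f n \<le> g n) sequentially"
    by auto
  then show "eventually (\<lambda>n. f n \<le> e * real n) sequentially" by eventually_elim simp
qed

lemma sublinear_sum:
  "finite A \<Longrightarrow> (\<And>i. i \<in> A \<Longrightarrow> sublinear (f i)) \<Longrightarrow> sublinear (\<lambda>n. \<Sum>i\<in>A. f i n)"
  by (induction A rule: finite_induct) (auto intro: sublinear_add sublinear_const)

lemma subquadratic_of_sublinear_increments:
  fixes z r :: "nat \<Rightarrow> real"
  assumes z: "\<And>n. n \<ge> n0 \<Longrightarrow> z (Suc n) \<le> z n + r n" and r: "sublinear r" and e: "e > 0"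
  shows "eventually (\<lambda>n. z n \<le> e * (real n)\<^sup>2) sequentially"
proof -
  obtain N1 where N1: "\<And>n. n \<ge> N1 \<Longrightarrow> r n \<le> e/2 * real n"
    using r e unfolding sublinear_def eventually_sequentially by (metis half_gt_zero)
  define N where "N = max n0 N1"
  have bound: "z n \<le> z N + e/2 * ((real n)\<^sup>2 - (real N)\<^sup>2)" if "n \<ge> N" for n
    using that
  proof (induction n rule: dec_induct)
    case (step m)
    have "z (Suc m) \<le> z m + e/2 * real m"
      using z[of m] N1[of m] step.hyps by (simp add: N_def)
    also have "\<dots> \<le> z N + e/2 * ((real m)\<^sup>2 - (real N)\<^sup>2) + e/2 * (2 * real m + 1)"
    proof -
      have "e/2 * real m \<le> e/2 * (2 * real m + 1)" using e by (intro mult_left_mono) auto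
      then show ?thesis using step.IH by linarith
    qed
    also have "\<dots> = z N + e/2 * ((real (Suc m))\<^sup>2 - (real N)\<^sup>2)"
      by (simp add: power2_eq_square algebra_simps)
    finally show ?case .
  qed simp
  have "eventually (\<lambda>n. z N \<le> e/2 * real n) sequentially"
    using sublinear_const[of "z N"] e unfolding sublinear_def by (metis half_gt_zero)
  then show ?thesis
    using eventually_ge_at_top[of N]
  proof eventually_elim
    case (elim n)
    have "real n \<le> (real n)\<^sup>2" by (cases n) (auto simp: power2_eq_square)
    then have "e/2 * real n \<le> e/2 * (real n)\<^sup>2" using e by (intro mult_left_mono) auto
    moreover have "0 \<le> e/2 * (real N)\<^sup>2" using e by simp
    ultimately show ?case using elim(1) bound[OF elim(2)] by (simp add: right_diff_distrib)
  qed
qed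

section \<open>Concentration for Markov chains with bounded increments\<close>

locale finite_pmf_chain =
  fixes M :: "nat \<Rightarrow> 'a pmf" and step :: "'a \<Rightarrow> 'a pmf" and n0 :: nat
  assumes M_Suc: "n \<ge> n0 \<Longrightarrow> M (Suc n) = M n \<bind> step"
    and finite_M: "n \<ge> n0 \<Longrightarrow> finite (set_pmf (M n))"
    and finite_step: "n \<ge> n0 \<Longrightarrow> s \<in> set_pmf (M n) \<Longrightarrow> finite (set_pmf (step s))"
begin

lemma expectation_M_Suc:
  fixes h :: "'a \<Rightarrow> real"
  assumes n: "n \<ge> n0"
  shows "measure_pmf.expectation (M (Suc n)) h
       = measure_pmf.expectation (M n) (\<lambda>s. measure_pmf.expectation (step s) h)"
proof -
  have "measure_pmf.expectation (M (Suc n)) h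
      = (\<Sum>s\<in>set_pmf (M n). pmf (M n) s *\<^sub>R measure_pmf.expectation (step s) h)"
    unfolding M_Suc[OF n]
    by (rule pmf_expectation_bind) (use finite_M[OF n] finite_step[OF n] in auto)
  also have "\<dots> = measure_pmf.expectation (M n) (\<lambda>s. measure_pmf.expectation (step s) h)"
    by (subst integral_measure_pmf_real[of "set_pmf (M n)"])
      (use finite_M[OF n] in \<open>auto simp: mult.commute\<close>)
  finally show ?thesis .
qed

lemma sublinear_expectation_mono:
  assumes "sublinear (\<lambda>n. measure_pmf.expectation (M n) (g n))"
    and "\<And>n s. n \<ge> n0 \<Longrightarrow> s \<in> set_pmf (M n) \<Longrightarrow> f n s \<le> g n s"
  shows "sublinear (\<lambda>n. measure_pmf.expectation (M n) (f n))"
  using assms(1)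
proof (rule sublinear_mono)
  show "eventually (\<lambda>n. measure_pmf.expectation (M n) (f n) \<le> measure_pmf.expectation (M n) (g n)) sequentially"
    using eventually_ge_at_top[of n0]
    by eventually_elim (rule pmf_expectation_mono_finite[OF finite_M assms(2)])
qed

lemma sublinear_expectation_add:
  assumes "sublinear (\<lambda>n. measure_pmf.expectation (M n) f)"
    and "sublinear (\<lambda>n. measure_pmf.expectation (M n) g)"
  shows "sublinear (\<lambda>n. measure_pmf.expectation (M n) (\<lambda>s. f s + g s))"
  using sublinear_add[OF assms]
proof (rule sublinear_mono)
  show "eventually (\<lambda>n. measure_pmf.expectation (M n) (\<lambda>s. f s + g s)
      \<le> measure_pmf.expectation (M n) f + measure_pmf.expectation (M n) g) sequentially"
    using eventually_ge_at_top[of n0] by eventually_elim (simp add: pmf_expectation_add_finite finite_M)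
qed

lemma sublinear_expectation_cmult:
  "sublinear (\<lambda>n. measure_pmf.expectation (M n) f) \<Longrightarrow> c \<ge> 0
    \<Longrightarrow> sublinear (\<lambda>n. measure_pmf.expectation (M n) (\<lambda>s. c * f s))"
  by (simp add: sublinear_cmult)

lemma sublinear_expectation_sum:
  assumes "finite A" "\<And>i. i \<in> A \<Longrightarrow> sublinear (\<lambda>n. measure_pmf.expectation (M n) (f i))"
  shows "sublinear (\<lambda>n. measure_pmf.expectation (M n) (\<lambda>s. \<Sum>i\<in>A. f i s))"
  using sublinear_sum[OF assms]
proof (rule sublinear_mono)
  show "eventually (\<lambda>n. measure_pmf.expectation (M n) (\<lambda>s. \<Sum>i\<in>A. f i s)
      \<le> (\<Sum>i\<in>A. measure_pmf.expectation (M n) (f i))) sequentially"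
    using eventually_ge_at_top[of n0]
    by eventually_elim (simp add: pmf_expectation_sum_finite finite_M assms(1))
qed

lemma second_moment_M_Suc_le:
  fixes y :: "'a \<Rightarrow> real"
  assumes n: "n \<ge> n0"
    and B: "\<And>s s'. s \<in> set_pmf (M n) \<Longrightarrow> s' \<in> set_pmf (step s) \<Longrightarrow> \<bar>y s' - y s\<bar> \<le> B"
    and D: "\<And>s. s \<in> set_pmf (M n) \<Longrightarrow> y s * (measure_pmf.expectation (step s) y - y s) \<le> g s"
  shows "measure_pmf.expectation (M (Suc n)) (\<lambda>s. (y s)\<^sup>2)
     \<le> measure_pmf.expectation (M n) (\<lambda>s. (y s)\<^sup>2) + (2 * measure_pmf.expectation (M n) g + B\<^sup>2)"
proof -
  have one_step: "measure_pmf.expectation (step s) (\<lambda>s'. (y s')\<^sup>2) \<le> (y s)\<^sup>2 + 2 * g s + B\<^sup>2"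
    if s: "s \<in> set_pmf (M n)" for s
  proof -
    have fin: "finite (set_pmf (step s))" by (rule finite_step[OF n s])
    have "measure_pmf.expectation (step s) (\<lambda>s'. (y s')\<^sup>2)
       \<le> measure_pmf.expectation (step s) (\<lambda>s'. ((y s)\<^sup>2 + 2 * y s * (y s' - y s)) + B\<^sup>2)"
    proof (rule pmf_expectation_mono_finite[OF fin])
      fix s' assume s': "s' \<in> set_pmf (step s)"
      have "\<bar>y s' - y s\<bar> \<le> \<bar>B\<bar>" using B[OF s s'] by linarith
      then have "(y s' - y s)\<^sup>2 \<le> B\<^sup>2" by (simp add: abs_le_square_iff)
      then show "(y s')\<^sup>2 \<le> ((y s)\<^sup>2 + 2 * y s * (y s' - y s)) + B\<^sup>2"
        by (simp add: power2_eq_square algebra_simps)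
    qed
    also have "\<dots> = (y s)\<^sup>2 + 2 * (y s * (measure_pmf.expectation (step s) y - y s)) + B\<^sup>2"
      by (simp add: pmf_expectation_add_finite[OF fin] pmf_expectation_diff_finite[OF fin]
          pmf_expectation_const algebra_simps)
    also have "\<dots> \<le> (y s)\<^sup>2 + 2 * g s + B\<^sup>2" using D[OF s] by simp
    finally show ?thesis .
  qed
  have fin: "finite (set_pmf (M n))" by (rule finite_M[OF n])
  have "measure_pmf.expectation (M (Suc n)) (\<lambda>s. (y s)\<^sup>2)
      = measure_pmf.expectation (M n) (\<lambda>s. measure_pmf.expectation (step s) (\<lambda>s'. (y s')\<^sup>2))"
    by (rule expectation_M_Suc[OF n])
  also have "\<dots> \<le> measure_pmf.expectation (M n) (\<lambda>s. (y s)\<^sup>2 + 2 * g s + B\<^sup>2)"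
    by (rule pmf_expectation_mono_finite[OF fin one_step])
  also have "\<dots> = measure_pmf.expectation (M n) (\<lambda>s. (y s)\<^sup>2) + (2 * measure_pmf.expectation (M n) g + B\<^sup>2)"
    by (simp add: pmf_expectation_add_finite[OF fin] pmf_expectation_const)
  finally show ?thesis .
qed

text \<open>The drift condition makes E y^2 grow by o(n) per step, so E y^2 = o(n^2); then
  use |y| \<le> (y^2 / (e n) + e n) / 2.\<close>

lemma sublinear_abs_of_drift:
  fixes y :: "'a \<Rightarrow> real" and g :: "nat \<Rightarrow> 'a \<Rightarrow> real"
  assumes B: "\<And>n s s'. n \<ge> n0 \<Longrightarrow> s \<in> set_pmf (M n) \<Longrightarrow> s' \<in> set_pmf (step s) \<Longrightarrow> \<bar>y s' - y s\<bar> \<le> B"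
    and D: "\<And>n s. n \<ge> n0 \<Longrightarrow> s \<in> set_pmf (M n) \<Longrightarrow>
        y s * (measure_pmf.expectation (step s) y - y s) \<le> g n s"
    and g: "sublinear (\<lambda>n. measure_pmf.expectation (M n) (g n))"
  shows "sublinear (\<lambda>n. measure_pmf.expectation (M n) (\<lambda>s. \<bar>y s\<bar>))"
  unfolding sublinear_def
proof (intro allI impI)
  fix e :: real assume e: "e > 0"
  define z where "z n = measure_pmf.expectation (M n) (\<lambda>s. (y s)\<^sup>2)" for n
  have "z (Suc n) \<le> z n + (2 * measure_pmf.expectation (M n) (g n) + B\<^sup>2)" if n: "n \<ge> n0" for n
    unfolding z_def by (rule second_moment_M_Suc_le[OF n]) (use B[OF n] D[OF n] in auto)
  moreover have "sublinear (\<lambda>n. 2 * measure_pmf.expectation (M n) (g n) + B\<^sup>2)"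
    by (intro sublinear_add sublinear_cmult g sublinear_const) simp
  ultimately have "eventually (\<lambda>n. z n \<le> e\<^sup>2 * (real n)\<^sup>2) sequentially"
    using e by (intro subquadratic_of_sublinear_increments) auto
  then show "eventually (\<lambda>n. measure_pmf.expectation (M n) (\<lambda>s. \<bar>y s\<bar>) \<le> e * real n) sequentially"
    using eventually_ge_at_top[of "max n0 1"]
  proof eventually_elim
    case (elim n)
    then have c: "e * real n > 0" using e by simp
    have "measure_pmf.expectation (M n) (\<lambda>s. \<bar>y s\<bar>) \<le> (z n / (e * real n) + e * real n) / 2"
      unfolding z_def using elim by (intro pmf_expectation_abs_le_second_moment finite_M c) simp
    also have "z n / (e * real n) \<le> e * real n"
      using elim(1) c by (simp add: divide_le_eq power2_eq_square mult_ac)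
    finally show ?case by simp
  qed
qed

lemma tendsto_prob_deviation_zero:
  fixes f :: "nat \<Rightarrow> 'a \<Rightarrow> real"
  assumes sub: "sublinear (\<lambda>n. measure_pmf.expectation (M n) (\<lambda>s. \<bar>f n s - real n * c\<bar>))"
    and \<epsilon>: "\<epsilon> > 0"
  shows "(\<lambda>n. measure_pmf.prob (M n) {s. \<bar>f n s / real n - c\<bar> > \<epsilon>}) \<longlonglongrightarrow> 0"
proof (rule order_tendstoI)
  fix a :: real assume "a < 0"
  then show "eventually (\<lambda>n. a < measure_pmf.prob (M n) {s. \<bar>f n s / real n - c\<bar> > \<epsilon>}) sequentially"
    by (intro always_eventually allI) (auto intro: less_le_trans)
next
  fix a :: real assume a: "a > 0"
  have "a * \<epsilon> / 2 > 0" using a \<epsilon> by simp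
  then have "eventually (\<lambda>n. measure_pmf.expectation (M n) (\<lambda>s. \<bar>f n s - real n * c\<bar>) \<le> a * \<epsilon> / 2 * real n)
      sequentially"
    using sub unfolding sublinear_def by blast
  then show "eventually (\<lambda>n. measure_pmf.prob (M n) {s. \<bar>f n s / real n - c\<bar> > \<epsilon>} < a) sequentially"
    using eventually_ge_at_top[of "max n0 1"]
  proof eventually_elim
    case (elim n)
    then have n: "real n > 0" and fin: "finite (set_pmf (M n))" by (auto intro: finite_M)
    have "{s. \<bar>f n s / real n - c\<bar> > \<epsilon>} \<subseteq> {s \<in> space (M n). \<bar>f n s - real n * c\<bar> \<ge> \<epsilon> * real n}"
    proof safe
      fix s assume "\<epsilon> < \<bar>f n s / real n - c\<bar>"
      also have "f n s / real n - c = (f n s - real n * c) / real n" using n by (simp add: field_simps)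
      finally show "\<epsilon> * real n \<le> \<bar>f n s - real n * c\<bar>" using n by (simp add: abs_divide field_simps)
    qed simp
    then have "measure_pmf.prob (M n) {s. \<bar>f n s / real n - c\<bar> > \<epsilon>}
        \<le> measure_pmf.prob (M n) {s \<in> space (M n). \<bar>f n s - real n * c\<bar> \<ge> \<epsilon> * real n}"
      by (rule measure_pmf.finite_measure_mono) simp
    also have "\<dots> \<le> measure_pmf.expectation (M n) (\<lambda>s. \<bar>f n s - real n * c\<bar>) / (\<epsilon> * real n)"
      using n \<epsilon> by (intro integral_Markov_inequality_measure[where A = UNIV]
          integrable_measure_pmf_finite fin) auto
    also have "\<dots> \<le> a * \<epsilon> / 2 * real n / (\<epsilon> * real n)"
      using elim(1) n \<epsilon> by (intro divide_right_mono) auto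
    also have "\<dots> < a" using a n \<epsilon> by simp
    finally show ?case .
  qed
qed

end

lemma sum_change_at:
  assumes "finite A" "v \<in> A" "\<And>w. w \<in> A \<Longrightarrow> w \<noteq> v \<Longrightarrow> g' w = g w"
  shows "sum g' A = sum g A + (g' v - (g v :: real))"
proof -
  have "sum g' A = g' v + sum g' (A - {v})" using assms by (simp add: sum.remove)
  also have "sum g' (A - {v}) = sum g (A - {v})" using assms by (intro sum.cong) auto
  also have "sum g (A - {v}) = sum g A - g v" using assms by (simp add: sum_diff1)
  finally show ?thesis by simp
qed

lemma ratio_approx_error:
  fixes a g X S L :: real
  assumes a: "0 \<le> a" "a \<le> g" and S: "0 < S" "\<bar>X\<bar> \<le> S" and L: "0 < L"
  shows "\<bar>a * (X / S) - a / g * X / L\<bar> \<le> \<bar>S - L * g\<bar> / L"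
proof (cases "a = 0")
  case False
  then have g: "g > 0" using a by simp
  have "a * (X / S) - a / g * X / L = (a * X) * (L * g - S) / ((S * g) * L)"
    using g S L by (simp add: field_simps)
  then have "\<bar>a * (X / S) - a / g * X / L\<bar> = (a * \<bar>X\<bar>) * \<bar>L * g - S\<bar> / ((S * g) * L)"
    using g S L a by (simp add: abs_mult)
  also have "\<dots> \<le> (g * S) * \<bar>L * g - S\<bar> / ((S * g) * L)"
    using g S L a by (intro divide_right_mono mult_right_mono mult_mono) auto
  also have "\<dots> = \<bar>S - L * g\<bar> / L"
    using g S L by (simp add: field_simps abs_minus_commute)
  finally show ?thesis .
qed (use L in simp)

lemma mult_drift_le:
  fixes y y' b b' c L D E :: real
  assumes L: "L > 0" and y: "\<bar>y\<bar> \<le> L * (1 + c)" and b: "b \<ge> 0" "b' \<ge> 0" and D: "\<bar>D\<bar> \<le> E / L"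
  shows "y * ((b' * y' - b * y) / L + D) \<le> b' * (1 + c) * \<bar>y'\<bar> + (1 + c) * E"
proof -
  have "y * ((b' * y' - b * y) / L + D) = b' * (y * y') / L - b * (y * y) / L + y * D"
    using L by (simp add: field_simps)
  also have "\<dots> \<le> b' * (\<bar>y\<bar> * \<bar>y'\<bar>) / L + \<bar>y\<bar> * \<bar>D\<bar>"
  proof -
    have "b' * (y * y') / L \<le> b' * (\<bar>y\<bar> * \<bar>y'\<bar>) / L"
      using b L by (intro divide_right_mono mult_left_mono) (auto simp: abs_mult[symmetric])
    moreover have "y * D \<le> \<bar>y\<bar> * \<bar>D\<bar>" by (simp add: abs_mult[symmetric])
    moreover have "b * (y * y) / L \<ge> 0" using b L by simp
    ultimately show ?thesis by linarith
  qed
  also have "\<dots> \<le> b' * (L * (1 + c) * \<bar>y'\<bar>) / L + L * (1 + c) * (E / L)"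
    using y D b L by (intro add_mono divide_right_mono mult_left_mono mult_right_mono mult_mono) auto
  also have "\<dots> = b' * (1 + c) * \<bar>y'\<bar> + (1 + c) * E"
    using L by (simp add: field_simps)
  finally show ?thesis .
qed

definition Gamma_profile :: "real \<Rightarrow> real \<Rightarrow> real \<Rightarrow> nat \<Rightarrow> real" where
  "Gamma_profile \<nu> a p k = p / \<nu> * (Gamma (real k + a) * Gamma (1 / \<nu> + a))
     / (Gamma a * Gamma (real k + 1 + 1 / \<nu> + a))"

lemma Gamma_succ_pos: "x > 0 \<Longrightarrow> Gamma (x + 1) = x * Gamma (x :: real)"
  by (intro Gamma_plus1) (auto dest: nonpos_Ints_nonpos)

text \<open>In the next two proofs the Gamma values are abstracted as A, G, ..., so that field_simps
  leaves their arguments alone.\<close>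

lemma Gamma_profile_0:
  assumes \<nu>: "\<nu> > 0" and a: "a > 0"
  shows "Gamma_profile \<nu> a p 0 = p / (1 + \<nu> * a)"
proof -
  have pos: "1 / \<nu> + a > 0" using \<nu> a by (simp add: add_pos_pos)
  have "Gamma (real 0 + 1 + 1 / \<nu> + a) = (1 / \<nu> + a) * Gamma (1 / \<nu> + a)"
    using Gamma_succ_pos[OF pos] by (simp add: add_ac)
  moreover have "p / \<nu> * (A * G) / (A * ((1 / \<nu> + a) * G)) = p / (1 + \<nu> * a)"
    if "A > 0" "G > 0" for A G
  proof -
    have "p / \<nu> * (A * G) / (A * ((1 / \<nu> + a) * G)) = p / \<nu> / (1 / \<nu> + a)"
      using that by (simp add: ac_simps)
    also have "\<dots> = p / (1 + \<nu> * a)" using \<nu> by (simp add: field_simps)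
    finally show ?thesis .
  qed
  ultimately show ?thesis
    unfolding Gamma_profile_def using Gamma_real_pos[OF a] Gamma_real_pos[OF pos] by simp
qed

lemma Gamma_profile_Suc:
  assumes \<nu>: "\<nu> > 0" and a: "a > 0"
  shows "Gamma_profile \<nu> a p (Suc k)
    = \<nu> * (real k + a) * Gamma_profile \<nu> a p k / (1 + \<nu> * (real (Suc k) + a))"
proof -
  have pos: "real k + a > 0" "real k + 1 + 1 / \<nu> + a > 0"
    using \<nu> a by (simp_all add: add_pos_pos)
  have "Gamma (real (Suc k) + a) = (real k + a) * Gamma (real k + a)"
    using Gamma_succ_pos[OF pos(1)] by (simp add: add_ac)
  moreover have "Gamma (real (Suc k) + 1 + 1 / \<nu> + a)
      = (real k + 1 + 1 / \<nu> + a) * Gamma (real k + 1 + 1 / \<nu> + a)"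
    using Gamma_succ_pos[OF pos(2)] by (simp add: add_ac)
  moreover have "p / \<nu> * ((real k + a) * Gk * G) / (A * ((real k + 1 + 1 / \<nu> + a) * Gk'))
      = \<nu> * (real k + a) * (p / \<nu> * (Gk * G) / (A * Gk')) / (1 + \<nu> * (real (Suc k) + a))"
    if "A > 0" "Gk' > 0" for A G Gk Gk'
  proof -
    have "1 + \<nu> * (real (Suc k) + a) = \<nu> * (real k + 1 + 1 / \<nu> + a)"
      using \<nu> by (simp add: field_simps)
    then show ?thesis using that \<nu> pos by (simp add: field_simps)
  qed
  ultimately show ?thesis
    unfolding Gamma_profile_def using a pos(2) by (simp add: Gamma_real_pos)
qed

lemma Gamma_profile_solves_recurrence:
  assumes "\<nu> > 0" "a > 0"
    and c0: "c 0 = p / (1 + \<nu> * a)"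
    and cSuc: "\<And>k. c (Suc k) = \<nu> * (real k + a) * c k / (1 + \<nu> * (real (Suc k) + a))"
  shows "c k = Gamma_profile \<nu> a p k"
  by (induction k) (simp_all add: c0 cSuc Gamma_profile_0 Gamma_profile_Suc assms)

lemma urrt_wf: "ps \<in> set_pmf (urrt m) \<Longrightarrow> length ps = m \<and> (\<forall>w<m. \<forall>v. ps ! w = Some v \<longrightarrow> v < m)"
proof (induction m arbitrary: ps)
  case (Suc m)
  from Suc.prems obtain ps0 par where ps0: "ps0 \<in> set_pmf (urrt m)"
    and par: "par \<in> set_pmf (if m = 0 then return_pmf None else map_pmf Some (pmf_of_set {..<m}))"
    and ps: "ps = ps0 @ [par]" by auto
  have "\<forall>v. par = Some v \<longrightarrow> v < m"
    using par by (cases "m = 0") (auto simp: set_pmf_of_set lessThan_empty_iff)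
  with Suc.IH[OF ps0] ps show ?case
    by (auto simp: nth_append less_Suc_eq)
qed simp

text \<open>Every type occurs, so the normalising sums of cmpa_target are positive.\<close>

definition wf_state :: "nat \<Rightarrow> nat \<Rightarrow> cmpa_state \<Rightarrow> bool" where
  "wf_state K n s \<longleftrightarrow> length s = n \<and> (\<forall>w<n. vtype s w < K) \<and> (\<forall>j<K. \<exists>w<n. vtype s w = j)
     \<and> (\<forall>w<n. \<forall>v. snd (s ! w) = Some v \<longrightarrow> v < n)"

lemma finite_wf_states: "finite {s. wf_state K n s}"
proof -
  have "{s. wf_state K n s} \<subseteq> {xs. set xs \<subseteq> {..<K} \<times> insert None (Some ` {..<n}) \<and> length xs = n}"
  proof (clarsimp simp: subset_iff, intro conjI allI impI)
    fix s a b assume wf: "wf_state K n s" and "(a, b) \<in> set s"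
    then obtain w where w: "w < n" "s ! w = (a, b)" by (auto simp: in_set_conv_nth wf_state_def)
    then show "a < K" using wf by (force simp: wf_state_def vtype_def)
    show "b = None \<or> b \<in> Some ` {..<n}"
      using wf w by (cases b) (force simp: wf_state_def)+
  qed (simp add: wf_state_def)
  moreover have "finite {xs. set xs \<subseteq> {..<K} \<times> insert None (Some ` {..<n}) \<and> length xs = n}"
    by (intro finite_lists_length_eq) auto
  ultimately show ?thesis by (rule finite_subset)
qed

lemma wf_state_init:
  assumes "s \<in> set_pmf (cmpa_init K)"
  shows "wf_state K K s"
proof -
  have fin: "finite {\<sigma>. \<sigma> permutes {..<K}}" by (rule finite_permutations) simp
  have ne: "{\<sigma>. \<sigma> permutes {..<K}} \<noteq> {}" using permutes_id by blast
  from assms obtain \<sigma> ps where \<sigma>: "\<sigma> permutes {..<K}" and ps: "ps \<in> set_pmf (urrt K)"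
    and s: "s = map (\<lambda>m. (\<sigma> m, ps ! m)) [0..<K]"
    unfolding cmpa_init_def using fin ne by (auto simp: set_pmf_of_set)
  have "\<exists>w<K. \<sigma> w = j" if "j < K" for j
    using that permutes_image[OF \<sigma>] by (metis image_iff lessThan_iff)
  moreover have "\<sigma> w < K" if "w < K" for w
    using that permutes_in_image[OF \<sigma>] by simp
  moreover have "length s = K" "\<And>w. w < K \<Longrightarrow> s ! w = (\<sigma> w, ps ! w)"
    by (simp_all add: s)
  ultimately show ?thesis
    using urrt_wf[OF ps] unfolding wf_state_def vtype_def by auto (metis fst_conv)
qed

definition vertices_of_type :: "nat \<Rightarrow> cmpa_state \<Rightarrow> nat set" where
  "vertices_of_type j s = {v \<in> {..<length s}. vtype s v = j}"

definition attach_weight :: "real \<Rightarrow> cmpa_state \<Rightarrow> nat \<Rightarrow> real" where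
  "attach_weight a s j = (\<Sum>v\<in>vertices_of_type j s. real (outdeg s v) + a)"

definition attach_prob :: "real \<Rightarrow> cmpa_state \<Rightarrow> nat \<Rightarrow> nat \<Rightarrow> real" where
  "attach_prob a s j v = (real (outdeg s v) + a) / attach_weight a s j"

lemma sum_vertices_of_type:
  "(\<Sum>v\<in>vertices_of_type j s. g v) = (\<Sum>w<length s. if vtype s w = j then g w else 0)"
  unfolding vertices_of_type_def by (rule sum.inter_filter) simp

lemma attach_weight_pos:
  assumes "wf_state K n s" "j < K" "a > 0"
  shows "attach_weight a s j > 0"
proof -
  obtain w where w: "w \<in> vertices_of_type j s"
    using assms by (auto simp: wf_state_def vertices_of_type_def)
  have "0 < real (outdeg s w) + a" using assms by simp
  also have "\<dots> \<le> attach_weight a s j" unfolding attach_weight_def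
    by (intro member_le_sum) (use assms w in \<open>auto simp: vertices_of_type_def\<close>)
  finally show ?thesis .
qed

lemma sum_attach_prob:
  "attach_weight a s j > 0 \<Longrightarrow> (\<Sum>v\<in>vertices_of_type j s. attach_prob a s j v) = 1"
  unfolding attach_prob_def attach_weight_def by (simp add: sum_divide_distrib[symmetric])

lemma cmpa_target_eq:
  "cmpa_target \<alpha> s i j = pmf_of_list (map (\<lambda>v. (v, attach_prob (\<alpha> i j) s j v))
      (filter (\<lambda>v. vtype s v = j) [0..<length s]))"
proof -
  have "(\<Sum>v\<leftarrow>filter (\<lambda>v. vtype s v = j) [0..<length s]. real (outdeg s v) + \<alpha> i j)
        = attach_weight (\<alpha> i j) s j"
    unfolding attach_weight_def vertices_of_type_def
    by (subst sum_list_distinct_conv_sum_set) (auto intro!: sum.cong)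
  then show ?thesis unfolding cmpa_target_def attach_prob_def Let_def by (simp add: o_def)
qed

definition type_count :: "nat \<Rightarrow> cmpa_state \<Rightarrow> real" where
  "type_count t s = (\<Sum>w<length s. if vtype s w = t then 1 else 0)"

definition type_outdeg :: "nat \<Rightarrow> cmpa_state \<Rightarrow> real" where
  "type_outdeg t s = (\<Sum>w<length s. if vtype s w = t then real (outdeg s w) else 0)"

definition type_deg_count :: "nat \<Rightarrow> nat \<Rightarrow> cmpa_state \<Rightarrow> real" where
  "type_deg_count t k s = (\<Sum>w<length s. if vtype s w = t \<and> outdeg s w = k then 1 else 0)"

lemma attach_weight_eq: "attach_weight a s j = type_outdeg j s + a * type_count j s"
  unfolding attach_weight_def type_outdeg_def type_count_def sum_vertices_of_type
  by (subst sum_distrib_left) (auto simp: sum.distrib[symmetric] intro!: sum.cong)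

context
  fixes K n :: nat and s :: cmpa_state and i v :: nat
  assumes wf: "wf_state K n s"
begin

lemma length_wf: "length s = n"
  using wf by (simp add: wf_state_def)

lemma vtype_append:
  "w < n \<Longrightarrow> vtype (s @ [(i, Some v)]) w = vtype s w"
  "vtype (s @ [(i, Some v)]) n = i"
  by (auto simp: vtype_def nth_append length_wf)

lemma outdeg_append:
  assumes "w < n"
  shows "outdeg (s @ [(i, Some v)]) w = outdeg s w + (if w = v then 1 else 0)"
proof -
  have "{u. u < length (s @ [(i, Some v)]) \<and> snd ((s @ [(i, Some v)]) ! u) = Some w}
        = {u. u < length s \<and> snd (s ! u) = Some w} \<union> (if w = v then {n} else {})"
    by (auto simp: nth_append length_wf less_Suc_eq)
  then show ?thesis unfolding outdeg_def using length_wf by (auto simp: card_insert_if)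
qed

lemma outdeg_append_new:
  assumes v: "v < n"
  shows "outdeg (s @ [(i, Some v)]) n = 0"
proof -
  have "{u. u < length (s @ [(i, Some v)]) \<and> snd ((s @ [(i, Some v)]) ! u) = Some n} = {}"
    using wf v by (auto simp: nth_append length_wf less_Suc_eq wf_state_def)
  then show ?thesis unfolding outdeg_def by simp
qed

lemma sum_append: "(\<Sum>w<length (s @ [(i, Some v)]). g w) = (\<Sum>w<n. g w) + g n"
  by (simp add: length_wf)

lemma type_count_append: "type_count t (s @ [(i, Some v)]) = type_count t s + (if i = t then 1 else 0)"
proof -
  have "(\<Sum>w<n. if vtype (s @ [(i, Some v)]) w = t then 1 else 0) = (\<Sum>w<n. if vtype s w = t then 1 else (0::real))"
    by (intro sum.cong) (auto simp: vtype_append)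
  then show ?thesis unfolding type_count_def sum_append length_wf by (simp add: vtype_append)
qed

lemma type_outdeg_append:
  assumes v: "v < n"
  shows "type_outdeg t (s @ [(i, Some v)]) = type_outdeg t s + (if vtype s v = t then 1 else 0)"
proof -
  have "(\<Sum>w<n. if vtype (s @ [(i, Some v)]) w = t then real (outdeg (s @ [(i, Some v)]) w) else 0)
      = (\<Sum>w<n. if vtype s w = t then real (outdeg s w) + (if w = v then 1 else 0) else 0)"
    by (intro sum.cong) (auto simp: vtype_append outdeg_append)
  also have "\<dots> = (\<Sum>w<n. if vtype s w = t then real (outdeg s w) else 0) + (if vtype s v = t then 1 else 0)"
    using v sum_change_at[of "{..<n}" v "\<lambda>w. if vtype s w = t then real (outdeg s w) + (if w = v then 1 else 0) else 0"
       "\<lambda>w. if vtype s w = t then real (outdeg s w) else 0"] by auto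
  finally show ?thesis
    unfolding type_outdeg_def sum_append length_wf vtype_append(2) outdeg_append_new[OF v] by simp
qed

lemma type_deg_count_append:
  assumes v: "v < n"
  shows "type_deg_count t k (s @ [(i, Some v)]) = type_deg_count t k s + (if i = t \<and> k = 0 then 1 else 0)
   + (if vtype s v = t then (if Suc (outdeg s v) = k then 1 else 0) - (if outdeg s v = k then 1 else 0) else 0)"
proof -
  have "(\<Sum>w<n. if vtype (s @ [(i, Some v)]) w = t \<and> outdeg (s @ [(i, Some v)]) w = k then 1 else 0)
      = (\<Sum>w<n. if vtype s w = t \<and> outdeg s w + (if w = v then 1 else 0) = k then 1 else (0::real))"
    by (intro sum.cong) (auto simp: vtype_append outdeg_append)
  also have "\<dots> = (\<Sum>w<n. if vtype s w = t \<and> outdeg s w = k then 1 else 0)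
      + (if vtype s v = t then (if Suc (outdeg s v) = k then 1 else 0) - (if outdeg s v = k then 1 else 0) else 0)"
    using v sum_change_at[of "{..<n}" v "\<lambda>w. if vtype s w = t \<and> outdeg s w + (if w = v then 1 else 0) = k then 1 else (0::real)"
       "\<lambda>w. if vtype s w = t \<and> outdeg s w = k then 1 else 0"] by auto
  finally show ?thesis
    unfolding type_deg_count_def sum_append length_wf vtype_append(2) outdeg_append_new[OF v] by auto
qed

end

definition centred :: "(cmpa_state \<Rightarrow> real) \<Rightarrow> real \<Rightarrow> cmpa_state \<Rightarrow> real" where
  "centred f c s = f s - real (length s) * c"

definition deg_inflow :: "real \<Rightarrow> nat \<Rightarrow> nat \<Rightarrow> cmpa_state \<Rightarrow> real" where
  "deg_inflow a t k s = (if k = 0 then 0 else (real (k - 1) + a) * type_deg_count t (k - 1) s)"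

definition deg_outflow :: "real \<Rightarrow> nat \<Rightarrow> nat \<Rightarrow> cmpa_state \<Rightarrow> real" where
  "deg_outflow a t k s = (real k + a) * type_deg_count t k s"

lemma type_deg_count_nonneg: "0 \<le> type_deg_count t k s"
  unfolding type_deg_count_def by (intro sum_nonneg) auto

lemma type_deg_count_le_length: "type_deg_count t k s \<le> real (length s)"
proof -
  have "type_deg_count t k s \<le> (\<Sum>w<length s. (1::real))"
    unfolding type_deg_count_def by (intro sum_mono) auto
  then show ?thesis by simp
qed

lemma deg_outflow_le_attach_weight:
  assumes "a \<ge> 0"
  shows "0 \<le> deg_outflow a t k s" "deg_outflow a t k s \<le> attach_weight a s t"
proof -
  have "deg_outflow a t k s
      = (\<Sum>v\<in>vertices_of_type t s. (real (outdeg s v) + a) * (if outdeg s v = k then 1 else 0))"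
    unfolding deg_outflow_def sum_vertices_of_type type_deg_count_def sum_distrib_left
    by (intro sum.cong) auto
  also have "\<dots> \<le> attach_weight a s t"
    unfolding attach_weight_def using assms by (intro sum_mono) auto
  finally show "deg_outflow a t k s \<le> attach_weight a s t" .
  show "0 \<le> deg_outflow a t k s"
    unfolding deg_outflow_def using assms type_deg_count_nonneg by simp
qed

lemma deg_inflow_le_attach_weight:
  assumes "a \<ge> 0"
  shows "0 \<le> deg_inflow a t k s" "deg_inflow a t k s \<le> attach_weight a s t"
proof -
  have "attach_weight a s t \<ge> 0"
    unfolding attach_weight_def using assms by (intro sum_nonneg) auto
  then show "0 \<le> deg_inflow a t k s" "deg_inflow a t k s \<le> attach_weight a s t"
    using deg_outflow_le_attach_weight[OF assms, of t "k - 1" s]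
    by (auto simp: deg_inflow_def deg_outflow_def)
qed

lemma sum_attach_prob_deg_change:
  "(\<Sum>v\<in>vertices_of_type t s. attach_prob a s t v *
      ((if Suc (outdeg s v) = k then 1 else 0) - (if outdeg s v = k then 1 else 0)))
   = (deg_inflow a t k s - deg_outflow a t k s) / attach_weight a s t"
proof -
  have indicator: "(\<Sum>v\<in>vertices_of_type t s. attach_prob a s t v * (if outdeg s v = d then 1 else 0))
      = (real d + a) * type_deg_count t d s / attach_weight a s t" for d
    unfolding sum_vertices_of_type type_deg_count_def attach_prob_def sum_divide_distrib
      sum_distrib_left
    by (intro sum.cong) auto
  have "(\<Sum>v\<in>vertices_of_type t s. attach_prob a s t v *
      ((if Suc (outdeg s v) = k then 1 else 0) - (if outdeg s v = k then 1 else 0)))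
    = (\<Sum>v\<in>vertices_of_type t s. attach_prob a s t v * (if k = 0 then 0 else (if outdeg s v = k - 1 then 1 else 0)))
      - (\<Sum>v\<in>vertices_of_type t s. attach_prob a s t v * (if outdeg s v = k then 1 else 0))"
    by (simp add: sum_subtractf[symmetric] right_diff_distrib) (intro sum.cong; auto)
  also have "\<dots> = (deg_inflow a t k s - deg_outflow a t k s) / attach_weight a s t"
    by (cases "k = 0") (simp_all add: indicator deg_inflow_def deg_outflow_def diff_divide_distrib)
  finally show ?thesis .
qed

locale cmpa_model =
  fixes K :: nat and p :: "nat \<Rightarrow> real" and q \<alpha> :: "nat \<Rightarrow> nat \<Rightarrow> real"
  assumes K_pos: "K \<ge> 1" and p_nonneg: "\<forall>i<K. p i \<ge> 0" and p_sum: "(\<Sum>i<K. p i) = 1"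
    and q_nonneg: "\<forall>i<K. \<forall>j<K. q i j \<ge> 0" and q_sum: "\<forall>i<K. (\<Sum>j<K. q i j) = 1"
    and \<alpha>_pos: "\<forall>i<K. \<forall>j<K. \<alpha> i j > 0"
begin

abbreviation "step \<equiv> cmpa_step K p q \<alpha>"
abbreviation "tree \<equiv> cmpa_tree K p q \<alpha>"
abbreviation pstar :: "nat \<Rightarrow> real" where "pstar t \<equiv> p_star K p q t"
abbreviation \<nu> :: "nat \<Rightarrow> nat \<Rightarrow> real" where "\<nu> i t \<equiv> nu2 K p q \<alpha> i t"

lemma type_weights:
  "\<forall>t\<in>set [0..<K]. p t \<ge> 0" "sum_list (map p [0..<K]) = 1"
  "i < K \<Longrightarrow> \<forall>t\<in>set [0..<K]. q i t \<ge> 0" "i < K \<Longrightarrow> sum_list (map (q i) [0..<K]) = 1"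
  using p_nonneg p_sum q_nonneg q_sum by (auto simp: sum_list_upt_eq_sum)

lemma target_weights:
  assumes "wf_state K n s" "i < K" "j < K"
  shows "\<forall>v\<in>set (filter (\<lambda>v. vtype s v = j) [0..<length s]). attach_prob (\<alpha> i j) s j v \<ge> 0"
    "sum_list (map (attach_prob (\<alpha> i j) s j) (filter (\<lambda>v. vtype s v = j) [0..<length s])) = 1"
proof -
  have pos: "attach_weight (\<alpha> i j) s j > 0" using assms \<alpha>_pos by (intro attach_weight_pos) auto
  then show "\<forall>v\<in>set (filter (\<lambda>v. vtype s v = j) [0..<length s]). attach_prob (\<alpha> i j) s j v \<ge> 0"
    using assms \<alpha>_pos by (auto simp: attach_prob_def less_imp_le)
  have "set (filter (\<lambda>v. vtype s v = j) [0..<length s]) = vertices_of_type j s"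
    by (auto simp: vertices_of_type_def)
  then show "sum_list (map (attach_prob (\<alpha> i j) s j) (filter (\<lambda>v. vtype s v = j) [0..<length s])) = 1"
    using sum_attach_prob[OF pos] by (simp add: sum_list_distinct_conv_sum_set)
qed

lemma step_eq: "step s = pmf_of_list (map (\<lambda>t. (t, p t)) [0..<K]) \<bind> (\<lambda>i.
     pmf_of_list (map (\<lambda>t. (t, q i t)) [0..<K]) \<bind> (\<lambda>j.
     pmf_of_list (map (\<lambda>v. (v, attach_prob (\<alpha> i j) s j v)) (filter (\<lambda>v. vtype s v = j) [0..<length s])) \<bind>
     (\<lambda>v. return_pmf (s @ [(i, Some v)]))))"
  unfolding cmpa_step_def cmpa_target_eq by simp

lemma set_pmf_step:
  assumes "wf_state K n s" "s' \<in> set_pmf (step s)"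
  obtains i v where "i < K" "v < n" "s' = s @ [(i, Some v)]"
proof -
  from assms(2) obtain i j v where
    i: "i \<in> set_pmf (pmf_of_list (map (\<lambda>t. (t, p t)) [0..<K]))" and
    j: "j \<in> set_pmf (pmf_of_list (map (\<lambda>t. (t, q i t)) [0..<K]))" and
    v: "v \<in> set_pmf (pmf_of_list (map (\<lambda>v. (v, attach_prob (\<alpha> i j) s j v))
          (filter (\<lambda>v. vtype s v = j) [0..<length s])))" and
    s': "s' = s @ [(i, Some v)]"
    unfolding step_eq by auto
  have "i < K" using set_pmf_of_list_weights[OF type_weights(1,2)] i by auto
  moreover have "j < K" using set_pmf_of_list_weights[OF type_weights(3,4)[OF \<open>i < K\<close>]] j by auto
  moreover have "v < length s"
    using set_pmf_of_list_weights[OF target_weights[OF assms(1) \<open>i < K\<close> \<open>j < K\<close>]] v by auto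
  ultimately show ?thesis using that s' assms(1) by (simp add: wf_state_def)
qed

lemma wf_state_step:
  assumes wf: "wf_state K n s" and s': "s' \<in> set_pmf (step s)"
  shows "wf_state K (Suc n) s'"
proof -
  obtain i v where iv: "i < K" "v < n" "s' = s @ [(i, Some v)]" by (rule set_pmf_step[OF wf s'])
  have len: "length s = n" using wf by (simp add: wf_state_def)
  have "\<exists>w<Suc n. vtype s' w = j" if "j < K" for j
    using wf that iv by (auto simp: wf_state_def vtype_def nth_append len)
  then show ?thesis
    using wf iv unfolding wf_state_def vtype_def by (auto simp: nth_append len less_Suc_eq)
qed

lemma finite_set_pmf_step:
  assumes "wf_state K n s"
  shows "finite (set_pmf (step s))"
proof -
  have "set_pmf (step s) \<subseteq> {s'. wf_state K (Suc n) s'}" using wf_state_step[OF assms] by blast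
  then show ?thesis using finite_wf_states by (rule finite_subset)
qed

lemma expectation_step:
  fixes f :: "cmpa_state \<Rightarrow> real"
  assumes wf: "wf_state K n s"
  shows "measure_pmf.expectation (step s) f = (\<Sum>i<K. p i * (\<Sum>j<K. q i j *
      (\<Sum>v\<in>vertices_of_type j s. attach_prob (\<alpha> i j) s j v * f (s @ [(i, Some v)]))))"
proof -
  define T where "T i j = pmf_of_list (map (\<lambda>v. (v, attach_prob (\<alpha> i j) s j v))
      (filter (\<lambda>v. vtype s v = j) [0..<length s])) \<bind> (\<lambda>v. return_pmf (s @ [(i, Some v)]))" for i j
  define Q where "Q i = pmf_of_list (map (\<lambda>t. (t, q i t)) [0..<K]) \<bind> T i" for i
  have set_filter: "set (filter (\<lambda>v. vtype s v = j) [0..<length s]) = vertices_of_type j s" for j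
    by (auto simp: vertices_of_type_def)
  have T_finite: "finite (set_pmf (T i j))" if "i < K" "j < K" for i j
    unfolding T_def by (rule finite_set_pmf_bind_pmf_of_list_weights[OF target_weights[OF wf that]]) simp
  have T: "measure_pmf.expectation (T i j) f
       = (\<Sum>v\<in>vertices_of_type j s. attach_prob (\<alpha> i j) s j v * f (s @ [(i, Some v)]))"
    if "i < K" "j < K" for i j
    unfolding T_def by (subst pmf_expectation_bind_pmf_of_list_weights[OF _ target_weights[OF wf that]])
      (auto simp: set_filter[symmetric])
  have Q_finite: "finite (set_pmf (Q i))" if "i < K" for i
    unfolding Q_def
    by (rule finite_set_pmf_bind_pmf_of_list_weights[OF type_weights(3,4)[OF that] T_finite]) (simp_all add: that)
  have Q: "measure_pmf.expectation (Q i) f = (\<Sum>j<K. q i j *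
       (\<Sum>v\<in>vertices_of_type j s. attach_prob (\<alpha> i j) s j v * f (s @ [(i, Some v)])))"
    if "i < K" for i
    unfolding Q_def by (subst pmf_expectation_bind_pmf_of_list_weights[OF _ type_weights(3,4)[OF that]])
      (simp_all add: T T_finite that atLeast0LessThan)
  show ?thesis
    unfolding step_eq T_def[symmetric] Q_def[symmetric]
    by (subst pmf_expectation_bind_pmf_of_list_weights[OF _ type_weights(1,2)];
        simp add: Q Q_finite atLeast0LessThan)
qed

lemma tree_Suc: "n \<ge> K \<Longrightarrow> tree (Suc n) = tree n \<bind> step"
  unfolding cmpa_tree_def by (simp add: Suc_diff_le)

lemma wf_state_tree: "n \<ge> K \<Longrightarrow> s \<in> set_pmf (tree n) \<Longrightarrow> wf_state K n s"
proof (induction n arbitrary: s rule: dec_induct)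
  case base
  then show ?case using wf_state_init by (simp add: cmpa_tree_def)
next
  case (step m)
  then show ?case using tree_Suc[OF step(1)] wf_state_step by auto
qed

sublocale finite_pmf_chain tree step K
proof
  fix n s assume n: "n \<ge> K"
  show "tree (Suc n) = tree n \<bind> step" by (rule tree_Suc[OF n])
  have "set_pmf (tree n) \<subseteq> {s. wf_state K n s}" using wf_state_tree[OF n] by blast
  then show "finite (set_pmf (tree n))" using finite_wf_states by (rule finite_subset)
  show "finite (set_pmf (step s))" if "s \<in> set_pmf (tree n)"
    by (rule finite_set_pmf_step[OF wf_state_tree[OF n that]])
qed

lemma expectation_step_of_increments:
  fixes f :: "cmpa_state \<Rightarrow> real"
  assumes wf: "wf_state K n s" and t: "t < K"
    and f: "\<And>i v. i < K \<Longrightarrow> v < n \<Longrightarrow>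
       f (s @ [(i, Some v)]) = f s + a i + (if vtype s v = t then h i (outdeg s v) else 0)"
  shows "measure_pmf.expectation (step s) f = f s + (\<Sum>i<K. p i * a i)
     + (\<Sum>i<K. p i * q i t * (\<Sum>v\<in>vertices_of_type t s. attach_prob (\<alpha> i t) s t v * h i (outdeg s v)))"
proof -
  let ?H = "\<lambda>i. (\<Sum>v\<in>vertices_of_type t s. attach_prob (\<alpha> i t) s t v * h i (outdeg s v))"
  have len: "length s = n" using wf by (simp add: wf_state_def)
  have inner: "(\<Sum>v\<in>vertices_of_type j s. attach_prob (\<alpha> i j) s j v * f (s @ [(i, Some v)]))
     = f s + a i + (if j = t then ?H i else 0)" if ij: "i < K" "j < K" for i j
  proof -
    have "(\<Sum>v\<in>vertices_of_type j s. attach_prob (\<alpha> i j) s j v * f (s @ [(i, Some v)]))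
      = (\<Sum>v\<in>vertices_of_type j s. attach_prob (\<alpha> i j) s j v * (f s + a i)
          + (if j = t then attach_prob (\<alpha> i j) s j v * h i (outdeg s v) else 0))"
      using len by (intro sum.cong refl) (auto simp: f ij algebra_simps vertices_of_type_def)
    also have "\<dots> = (\<Sum>v\<in>vertices_of_type j s. attach_prob (\<alpha> i j) s j v) * (f s + a i)
        + (if j = t then ?H i else 0)"
      by (simp add: sum.distrib sum_distrib_right)
    also have "(\<Sum>v\<in>vertices_of_type j s. attach_prob (\<alpha> i j) s j v) = 1"
      using wf ij \<alpha>_pos by (intro sum_attach_prob attach_weight_pos) auto
    finally show ?thesis by simp
  qed
  have middle: "(\<Sum>j<K. q i j * (\<Sum>v\<in>vertices_of_type j s. attach_prob (\<alpha> i j) s j v * f (s @ [(i, Some v)])))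
     = f s + a i + q i t * ?H i" if i: "i < K" for i
  proof -
    have "(\<Sum>j<K. q i j * (\<Sum>v\<in>vertices_of_type j s. attach_prob (\<alpha> i j) s j v * f (s @ [(i, Some v)])))
      = (\<Sum>j<K. q i j * (f s + a i) + (if j = t then q i t * ?H i else 0))"
      by (intro sum.cong refl) (auto simp: inner i algebra_simps)
    also have "\<dots> = (\<Sum>j<K. q i j) * (f s + a i) + q i t * ?H i"
      using t by (simp add: sum.distrib sum_distrib_right)
    finally show ?thesis using q_sum i by simp
  qed
  have "measure_pmf.expectation (step s) f = (\<Sum>i<K. p i * (f s + a i + q i t * ?H i))"
    by (simp add: expectation_step[OF wf] middle)
  also have "\<dots> = (\<Sum>i<K. p i) * f s + (\<Sum>i<K. p i * a i) + (\<Sum>i<K. p i * q i t * ?H i)"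
    by (simp add: sum.distrib distrib_left sum_distrib_right mult.assoc)
  finally show ?thesis using p_sum by simp
qed

lemma expectation_step_length:
  "wf_state K n s \<Longrightarrow> measure_pmf.expectation (step s) (\<lambda>s. real (length s)) = real (length s) + 1"
  using expectation_step_of_increments[of n s 0 "\<lambda>s. real (length s)" "\<lambda>_. 1" "\<lambda>_ _. 0"] K_pos p_sum
  by (simp add: wf_state_def)

lemma expectation_step_type_count:
  "wf_state K n s \<Longrightarrow> t < K \<Longrightarrow>
     measure_pmf.expectation (step s) (type_count t) = type_count t s + p t"
  using expectation_step_of_increments[of n s t "type_count t" "\<lambda>i. if i = t then 1 else 0" "\<lambda>_ _. 0"]
  by (simp add: type_count_append if_distrib cong: if_cong)

lemma expectation_step_type_outdeg:
  assumes wf: "wf_state K n s" and t: "t < K"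
  shows "measure_pmf.expectation (step s) (type_outdeg t) = type_outdeg t s + pstar t"
proof -
  have "measure_pmf.expectation (step s) (type_outdeg t) = type_outdeg t s + 0
     + (\<Sum>i<K. p i * q i t * (\<Sum>v\<in>vertices_of_type t s. attach_prob (\<alpha> i t) s t v * 1))"
    using expectation_step_of_increments[OF wf t, of "type_outdeg t" "\<lambda>_. 0" "\<lambda>_ _. 1"]
    by (simp add: type_outdeg_append[OF wf])
  also have "\<dots> = type_outdeg t s + pstar t"
    using wf t \<alpha>_pos by (simp add: p_star_def sum_attach_prob attach_weight_pos)
  finally show ?thesis .
qed

lemma expectation_step_type_deg_count:
  assumes wf: "wf_state K n s" and t: "t < K"
  shows "measure_pmf.expectation (step s) (type_deg_count t k) = type_deg_count t k s
     + (if k = 0 then p t else 0)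
     + (\<Sum>i<K. p i * q i t * ((deg_inflow (\<alpha> i t) t k s - deg_outflow (\<alpha> i t) t k s)
          / attach_weight (\<alpha> i t) s t))"
proof -
  have "measure_pmf.expectation (step s) (type_deg_count t k) = type_deg_count t k s
      + (\<Sum>i<K. p i * (if i = t \<and> k = 0 then 1 else 0))
      + (\<Sum>i<K. p i * q i t * (\<Sum>v\<in>vertices_of_type t s. attach_prob (\<alpha> i t) s t v *
          ((if Suc (outdeg s v) = k then 1 else 0) - (if outdeg s v = k then 1 else 0))))"
    by (rule expectation_step_of_increments[OF wf t]) (simp add: type_deg_count_append[OF wf])
  moreover have "(\<Sum>i<K. p i * (if i = t \<and> k = 0 then 1 else 0)) = (if k = 0 then p t else 0)"
    using t by (simp add: if_distrib cong: if_cong)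
  ultimately show ?thesis by (simp add: sum_attach_prob_deg_change)
qed

lemma expectation_step_centred:
  "wf_state K n s \<Longrightarrow> measure_pmf.expectation (step s) (centred f c) - centred f c s
     = measure_pmf.expectation (step s) f - f s - c"
  unfolding centred_def
  by (simp add: pmf_expectation_diff_finite finite_set_pmf_step expectation_step_length algebra_simps)

lemma centred_step_increment:
  assumes "wf_state K n s" "s' \<in> set_pmf (step s)"
  shows "centred f c s' - centred f c s = f s' - f s - c"
proof -
  obtain i v where "s' = s @ [(i, Some v)]" by (rule set_pmf_step[OF assms])
  then show ?thesis by (simp add: centred_def algebra_simps)
qed

lemma sublinear_centred_of_constant_drift:
  assumes drift: "\<And>n s. wf_state K n s \<Longrightarrow> measure_pmf.expectation (step s) f = f s + c"
    and incr: "\<And>n s s'. wf_state K n s \<Longrightarrow> s' \<in> set_pmf (step s) \<Longrightarrow> \<bar>f s' - f s\<bar> \<le> B"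
  shows "sublinear (\<lambda>n. measure_pmf.expectation (tree n) (\<lambda>s. \<bar>centred f c s\<bar>))"
proof (rule sublinear_abs_of_drift[where g = "\<lambda>_ _. 0" and B = "B + \<bar>c\<bar>"])
  fix n s s' assume "n \<ge> K" "s \<in> set_pmf (tree n)" "s' \<in> set_pmf (step s)"
  then have wf: "wf_state K n s" and s': "s' \<in> set_pmf (step s)" by (auto intro: wf_state_tree)
  show "\<bar>centred f c s' - centred f c s\<bar> \<le> B + \<bar>c\<bar>"
    using centred_step_increment[OF wf s', of f c] incr[OF wf s'] by linarith
next
  fix n s assume "n \<ge> K" "s \<in> set_pmf (tree n)"
  then have wf: "wf_state K n s" by (rule wf_state_tree)
  show "centred f c s * (measure_pmf.expectation (step s) (centred f c) - centred f c s) \<le> 0"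
    by (simp add: expectation_step_centred[OF wf] drift[OF wf])
qed (simp add: sublinear_const)

definition attach_rate :: "nat \<Rightarrow> nat \<Rightarrow> real" where
  "attach_rate i t = \<alpha> i t * p t + pstar t"

definition weight_dev :: "nat \<Rightarrow> nat \<Rightarrow> cmpa_state \<Rightarrow> real" where
  "weight_dev i t = centred (\<lambda>s. attach_weight (\<alpha> i t) s t) (attach_rate i t)"

lemma sublinear_weight_dev:
  assumes "i < K" "t < K"
  shows "sublinear (\<lambda>n. measure_pmf.expectation (tree n) (\<lambda>s. \<bar>weight_dev i t s\<bar>))"
proof (rule sublinear_expectation_mono)
  have T: "sublinear (\<lambda>n. measure_pmf.expectation (tree n) (\<lambda>s. \<bar>centred (type_count t) (p t) s\<bar>))"
  proof (rule sublinear_centred_of_constant_drift[where B = 1])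
    fix n s s' assume wf: "wf_state K n s" and "s' \<in> set_pmf (step s)"
    then obtain j v where "v < n" "s' = s @ [(j, Some v)]" by (rule set_pmf_step)
    then show "\<bar>type_count t s' - type_count t s\<bar> \<le> 1" by (simp add: type_count_append[OF wf])
  qed (rule expectation_step_type_count[OF _ assms(2)])
  have E: "sublinear (\<lambda>n. measure_pmf.expectation (tree n) (\<lambda>s. \<bar>centred (type_outdeg t) (pstar t) s\<bar>))"
  proof (rule sublinear_centred_of_constant_drift[where B = 1])
    fix n s s' assume wf: "wf_state K n s" and "s' \<in> set_pmf (step s)"
    then obtain j v where "v < n" "s' = s @ [(j, Some v)]" by (rule set_pmf_step)
    then show "\<bar>type_outdeg t s' - type_outdeg t s\<bar> \<le> 1" by (simp add: type_outdeg_append[OF wf])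
  qed (rule expectation_step_type_outdeg[OF _ assms(2)])
  have "\<alpha> i t \<ge> 0" using assms \<alpha>_pos by (simp add: less_imp_le)
  then show "sublinear (\<lambda>n. measure_pmf.expectation (tree n)
      (\<lambda>s. \<bar>centred (type_outdeg t) (pstar t) s\<bar> + \<alpha> i t * \<bar>centred (type_count t) (p t) s\<bar>))"
    by (intro sublinear_expectation_add sublinear_expectation_cmult T E)
  show "\<bar>weight_dev i t s\<bar>
      \<le> \<bar>centred (type_outdeg t) (pstar t) s\<bar> + \<alpha> i t * \<bar>centred (type_count t) (p t) s\<bar>" for s
  proof -
    have "weight_dev i t s
        = centred (type_outdeg t) (pstar t) s + \<alpha> i t * centred (type_count t) (p t) s"
      by (simp add: weight_dev_def centred_def attach_weight_eq attach_rate_def algebra_simps)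
    then show ?thesis
      using \<open>\<alpha> i t \<ge> 0\<close> abs_triangle_ineq[of "centred (type_outdeg t) (pstar t) s"
          "\<alpha> i t * centred (type_count t) (p t) s"] by (simp add: abs_mult)
  qed
qed

section \<open>Degree counts\<close>

lemma pq_nonneg: "i < K \<Longrightarrow> t < K \<Longrightarrow> p i * q i t \<ge> 0"
  using p_nonneg q_nonneg by auto

lemma pq_le_attach_rate: "i < K \<Longrightarrow> t < K \<Longrightarrow> p i * q i t \<le> attach_rate i t"
proof -
  assume it: "i < K" "t < K"
  have "p i * q i t \<le> pstar t"
    unfolding p_star_def using pq_nonneg it by (intro member_le_sum) auto
  moreover have "\<alpha> i t * p t \<ge> 0" using \<alpha>_pos p_nonneg it by (simp add: less_imp_le)
  ultimately show ?thesis unfolding attach_rate_def by linarith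
qed

lemma \<nu>_eq: "\<nu> i t = p i * q i t / attach_rate i t"
  unfolding nu2_def attach_rate_def ..

lemma \<nu>_nonneg:
  assumes "i < K" "t < K"
  shows "\<nu> i t \<ge> 0"
proof -
  have "0 \<le> attach_rate i t" using pq_nonneg[OF assms] pq_le_attach_rate[OF assms] by linarith
  then show ?thesis unfolding \<nu>_eq using pq_nonneg[OF assms] by simp
qed

text \<open>jump_rate t k and deg_limit t k are b_k and c_{t,k} of the overview.\<close>

definition jump_rate :: "nat \<Rightarrow> nat \<Rightarrow> real" where
  "jump_rate t k = (\<Sum>i<K. \<nu> i t * (real k + \<alpha> i t))"

primrec deg_limit :: "nat \<Rightarrow> nat \<Rightarrow> real" where
  "deg_limit t 0 = p t / (1 + jump_rate t 0)"
| "deg_limit t (Suc k) = jump_rate t k * deg_limit t k / (1 + jump_rate t (Suc k))"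

lemma jump_rate_nonneg: "t < K \<Longrightarrow> jump_rate t k \<ge> 0"
  unfolding jump_rate_def using \<nu>_nonneg \<alpha>_pos
  by (intro sum_nonneg mult_nonneg_nonneg) (auto simp: less_imp_le add_nonneg_nonneg)

lemma deg_limit_nonneg: "t < K \<Longrightarrow> deg_limit t k \<ge> 0"
  by (induction k) (use jump_rate_nonneg p_nonneg in auto)

lemma deg_limit_balance:
  "t < K \<Longrightarrow> deg_limit t k * (1 + jump_rate t k)
     = (if k = 0 then p t else 0) + (if k = 0 then 0 else jump_rate t (k - 1) * deg_limit t (k - 1))"
  using jump_rate_nonneg[of t k] by (cases k) (simp_all add: add_pos_nonneg)

definition deg_dev :: "nat \<Rightarrow> nat \<Rightarrow> cmpa_state \<Rightarrow> real" where
  "deg_dev t k = centred (type_deg_count t k) (deg_limit t k)"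

lemma abs_deg_dev_le:
  assumes "t < K"
  shows "\<bar>deg_dev t k s\<bar> \<le> real (length s) * (1 + deg_limit t k)"
proof -
  have "0 \<le> real (length s) * deg_limit t k" using deg_limit_nonneg[OF assms] by simp
  then show ?thesis
    using type_deg_count_nonneg[of t k s] type_deg_count_le_length[of t k s]
    unfolding deg_dev_def centred_def abs_le_iff distrib_left by linarith
qed

lemma deg_dev_increment:
  assumes wf: "wf_state K n s" and s': "s' \<in> set_pmf (step s)"
  shows "\<bar>deg_dev t k s' - deg_dev t k s\<bar> \<le> 2 + \<bar>deg_limit t k\<bar>"
proof -
  obtain i v where v: "v < n" and s'_eq: "s' = s @ [(i, Some v)]" by (rule set_pmf_step[OF wf s'])
  have "\<bar>type_deg_count t k s' - type_deg_count t k s\<bar> \<le> 2"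
    unfolding s'_eq type_deg_count_append[OF wf v] by auto
  then show ?thesis
    using centred_step_increment[OF wf s', of "type_deg_count t k" "deg_limit t k"]
    unfolding deg_dev_def by linarith
qed

lemma sum_\<nu>_deg_flow:
  "(\<Sum>i<K. \<nu> i t * (deg_inflow (\<alpha> i t) t k s - deg_outflow (\<alpha> i t) t k s))
     = (if k = 0 then 0 else jump_rate t (k - 1)) * (if k = 0 then 0 else type_deg_count t (k - 1) s)
       - jump_rate t k * type_deg_count t k s"
  unfolding jump_rate_def deg_inflow_def deg_outflow_def
  by (simp add: right_diff_distrib sum_subtractf sum_distrib_right mult.assoc)

text \<open>As \<nu> i t = p i * q i t / attach_rate i t, the second sum is the first one with each
  attach_weight replaced by its linear approximation n \<cdot> attach_rate.\<close>

lemma deg_flow_approx: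
  assumes wf: "wf_state K n s" and t: "t < K" and n: "n > 0"
  shows "\<bar>(\<Sum>i<K. p i * q i t * ((deg_inflow (\<alpha> i t) t k s - deg_outflow (\<alpha> i t) t k s)
              / attach_weight (\<alpha> i t) s t))
          - (\<Sum>i<K. \<nu> i t * (deg_inflow (\<alpha> i t) t k s - deg_outflow (\<alpha> i t) t k s)) / real n\<bar>
     \<le> (\<Sum>i<K. \<bar>weight_dev i t s\<bar>) / real n"
proof -
  define X where "X i = deg_inflow (\<alpha> i t) t k s - deg_outflow (\<alpha> i t) t k s" for i
  define S where "S i = attach_weight (\<alpha> i t) s t" for i
  have "\<bar>p i * q i t * (X i / S i) - \<nu> i t * X i / real n\<bar> \<le> \<bar>weight_dev i t s\<bar> / real n"
    if i: "i < K" for i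
  proof -
    have \<alpha>: "\<alpha> i t \<ge> 0" using \<alpha>_pos i t by (simp add: less_imp_le)
    have "0 < S i" unfolding S_def using wf t \<alpha>_pos i by (intro attach_weight_pos) auto
    moreover have "\<bar>X i\<bar> \<le> S i"
      using deg_inflow_le_attach_weight[OF \<alpha>, of t k s] deg_outflow_le_attach_weight[OF \<alpha>, of t k s]
      unfolding X_def S_def abs_le_iff by linarith
    ultimately show ?thesis
      using ratio_approx_error[OF pq_nonneg[OF i t] pq_le_attach_rate[OF i t], of "S i" "X i" "real n"] n wf
      by (simp add: \<nu>_eq weight_dev_def centred_def S_def wf_state_def)
  qed
  then have "\<bar>\<Sum>i<K. p i * q i t * (X i / S i) - \<nu> i t * X i / real n\<bar> \<le> (\<Sum>i<K. \<bar>weight_dev i t s\<bar> / real n)"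
    by (intro order.trans[OF sum_abs] sum_mono) simp
  then show ?thesis
    unfolding X_def[symmetric] S_def[symmetric]
    by (simp add: sum_subtractf sum_divide_distrib)
qed

text \<open>By deg_limit_balance the constant terms of the drift cancel.\<close>

lemma deg_dev_drift:
  assumes wf: "wf_state K n s" and t: "t < K" and n: "n > 0"
  obtains D where
    "measure_pmf.expectation (step s) (deg_dev t k) - deg_dev t k s
       = ((if k = 0 then 0 else jump_rate t (k - 1)) * (if k = 0 then 0 else deg_dev t (k - 1) s)
          - jump_rate t k * deg_dev t k s) / real n + D"
    "\<bar>D\<bar> \<le> (\<Sum>i<K. \<bar>weight_dev i t s\<bar>) / real n"
proof -
  have len: "length s = n" using wf by (simp add: wf_state_def)
  define F where "F = (\<Sum>i<K. p i * q i t * ((deg_inflow (\<alpha> i t) t k s - deg_outflow (\<alpha> i t) t k s)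
      / attach_weight (\<alpha> i t) s t))"
  define b' where "b' = (if k = 0 then 0 else jump_rate t (k - 1))"
  define N' where "N' = (if k = 0 then 0 else type_deg_count t (k - 1) s)"
  define c' where "c' = (if k = 0 then 0 else deg_limit t (k - 1))"
  define p0 where "p0 = (if k = 0 then p t else 0)"
  define D where "D = F - (b' * N' - jump_rate t k * type_deg_count t k s) / real n"
  have D_le: "\<bar>D\<bar> \<le> (\<Sum>i<K. \<bar>weight_dev i t s\<bar>) / real n"
    using deg_flow_approx[OF wf t n, of k] unfolding D_def F_def b'_def N'_def sum_\<nu>_deg_flow .
  have "measure_pmf.expectation (step s) (deg_dev t k) - deg_dev t k s = p0 + F - deg_limit t k"
    unfolding deg_dev_def expectation_step_centred[OF wf] expectation_step_type_deg_count[OF wf t]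
    by (simp add: F_def p0_def)
  also have "\<dots> = (b' * (N' - real n * c') - jump_rate t k * (type_deg_count t k s - real n * deg_limit t k))
      / real n + D"
  proof -
    have "p0 - deg_limit t k = jump_rate t k * deg_limit t k - b' * c'"
      using deg_limit_balance[OF t, of k] unfolding p0_def b'_def c'_def by (simp add: algebra_simps)
    moreover have "(b' * (N' - real n * c') - jump_rate t k * (type_deg_count t k s - real n * deg_limit t k)) / real n
        = (b' * N' - jump_rate t k * type_deg_count t k s) / real n - b' * c' + jump_rate t k * deg_limit t k"
      using n by (simp add: field_simps)
    ultimately show ?thesis unfolding D_def by linarith
  qed
  also have "N' - real n * c' = (if k = 0 then 0 else deg_dev t (k - 1) s)"
    by (simp add: N'_def c'_def deg_dev_def centred_def len)
  also have "type_deg_count t k s - real n * deg_limit t k = deg_dev t k s"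
    by (simp add: deg_dev_def centred_def len)
  finally show ?thesis using D_le unfolding b'_def by (rule that)
qed

lemma deg_dev_mult_drift_le:
  assumes wf: "wf_state K n s" and t: "t < K" and n: "n > 0"
  shows "deg_dev t k s * (measure_pmf.expectation (step s) (deg_dev t k) - deg_dev t k s)
     \<le> (if k = 0 then 0 else jump_rate t (k - 1)) * (1 + deg_limit t k)
          * \<bar>if k = 0 then 0 else deg_dev t (k - 1) s\<bar>
       + (1 + deg_limit t k) * (\<Sum>i<K. \<bar>weight_dev i t s\<bar>)"
proof -
  obtain D where drift:
    "measure_pmf.expectation (step s) (deg_dev t k) - deg_dev t k s
       = ((if k = 0 then 0 else jump_rate t (k - 1)) * (if k = 0 then 0 else deg_dev t (k - 1) s)
          - jump_rate t k * deg_dev t k s) / real n + D"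
    and D: "\<bar>D\<bar> \<le> (\<Sum>i<K. \<bar>weight_dev i t s\<bar>) / real n"
    by (rule deg_dev_drift[OF wf t n])
  have "\<bar>deg_dev t k s\<bar> \<le> real n * (1 + deg_limit t k)"
    using abs_deg_dev_le[OF t, of k s] wf by (simp add: wf_state_def)
  moreover have "(if k = 0 then 0 else jump_rate t (k - 1)) \<ge> 0" "jump_rate t k \<ge> 0"
    using jump_rate_nonneg[OF t] by auto
  ultimately show ?thesis
    unfolding drift using n D by (intro mult_drift_le) auto
qed

lemma sublinear_deg_dev_step:
  assumes t: "t < K"
    and IH: "k > 0 \<Longrightarrow> sublinear (\<lambda>n. measure_pmf.expectation (tree n) (\<lambda>s. \<bar>deg_dev t (k - 1) s\<bar>))"
  shows "sublinear (\<lambda>n. measure_pmf.expectation (tree n) (\<lambda>s. \<bar>deg_dev t k s\<bar>))"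
proof -
  define b where "b = (if k = 0 then 0 else jump_rate t (k - 1)) * (1 + deg_limit t k)"
  define c where "c = 1 + deg_limit t k"
  have bc: "b \<ge> 0" "c \<ge> 0"
    unfolding b_def c_def using jump_rate_nonneg[OF t] deg_limit_nonneg[OF t] by auto
  show ?thesis
  proof (rule sublinear_abs_of_drift[where B = "2 + \<bar>deg_limit t k\<bar>"
        and g = "\<lambda>_ s. b * \<bar>if k = 0 then 0 else deg_dev t (k - 1) s\<bar> + c * (\<Sum>i<K. \<bar>weight_dev i t s\<bar>)"])
    fix n s s' assume "n \<ge> K" "s \<in> set_pmf (tree n)" "s' \<in> set_pmf (step s)"
    then show "\<bar>deg_dev t k s' - deg_dev t k s\<bar> \<le> 2 + \<bar>deg_limit t k\<bar>"
      by (intro deg_dev_increment wf_state_tree)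
  next
    fix n s assume "n \<ge> K" "s \<in> set_pmf (tree n)"
    then show "deg_dev t k s * (measure_pmf.expectation (step s) (deg_dev t k) - deg_dev t k s)
        \<le> b * \<bar>if k = 0 then 0 else deg_dev t (k - 1) s\<bar> + c * (\<Sum>i<K. \<bar>weight_dev i t s\<bar>)"
      using deg_dev_mult_drift_le[OF wf_state_tree t, of n s k] K_pos by (simp add: b_def c_def)
  next
    have prev: "sublinear (\<lambda>n. measure_pmf.expectation (tree n) (\<lambda>s. \<bar>if k = 0 then 0 else deg_dev t (k - 1) s\<bar>))"
      using IH by (cases "k = 0") (simp_all add: sublinear_const)
    have "sublinear (\<lambda>n. measure_pmf.expectation (tree n) (\<lambda>s. \<Sum>i<K. \<bar>weight_dev i t s\<bar>))"
      using sublinear_weight_dev t by (intro sublinear_expectation_sum) simp_all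
    then show "sublinear (\<lambda>n. measure_pmf.expectation (tree n)
        (\<lambda>s. b * \<bar>if k = 0 then 0 else deg_dev t (k - 1) s\<bar> + c * (\<Sum>i<K. \<bar>weight_dev i t s\<bar>)))"
      by (intro sublinear_expectation_add sublinear_expectation_cmult prev bc)
  qed
qed

lemma sublinear_deg_dev:
  assumes t: "t < K"
  shows "sublinear (\<lambda>n. measure_pmf.expectation (tree n) (\<lambda>s. \<bar>deg_dev t k s\<bar>))"
proof (induction k)
  case 0
  show ?case by (rule sublinear_deg_dev_step[OF t]) simp
next
  case (Suc k)
  show ?case by (rule sublinear_deg_dev_step[OF t]) (use Suc.IH in simp)
qed

section \<open>Identification of the limit\<close>

lemma jump_rate_eq_0:
  assumes t: "t < K" and "pstar t = 0"
  shows "jump_rate t k = 0"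
proof -
  have "p i * q i t = 0" if "i < K" for i
    using assms sum_nonneg_eq_0_iff[of "{..<K}" "\<lambda>i. p i * q i t"] pq_nonneg[OF _ t] that
    unfolding p_star_def by auto
  then show ?thesis unfolding jump_rate_def \<nu>_eq by (auto intro!: sum.neutral)
qed

lemma jump_rate_eq_affine:
  assumes "nu1 K p q \<alpha> t \<noteq> 0"
  shows "jump_rate t k = nu1 K p q \<alpha> t * (real k + alpha1 K p q \<alpha> t)"
proof -
  have "nu1 K p q \<alpha> t * alpha1 K p q \<alpha> t = (\<Sum>i<K. \<nu> i t * \<alpha> i t)"
    unfolding alpha1_def using assms by simp
  then show ?thesis
    unfolding jump_rate_def distrib_left by (simp add: nu1_def sum.distrib sum_distrib_left mult.commute)
qed

lemma nu1_alpha1_pos: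
  assumes t: "t < K" and "pstar t \<noteq> 0"
  shows "nu1 K p q \<alpha> t > 0" "alpha1 K p q \<alpha> t > 0"
proof -
  obtain j where j: "j < K" "p j * q j t \<noteq> 0"
    using assms(2) unfolding p_star_def by (meson lessThan_iff sum.neutral)
  have \<nu>_pos: "\<nu> j t > 0"
  proof -
    have "p j * q j t > 0" using j pq_nonneg[OF j(1) t] by linarith
    moreover have "p j * q j t \<le> attach_rate j t" by (rule pq_le_attach_rate[OF j(1) t])
    ultimately show ?thesis unfolding \<nu>_eq by simp
  qed
  have "\<nu> j t \<le> nu1 K p q \<alpha> t"
    unfolding nu1_def using j \<nu>_nonneg[OF _ t] by (intro member_le_sum) auto
  then show nu1_pos: "nu1 K p q \<alpha> t > 0" using \<nu>_pos by simp
  have "\<nu> j t * \<alpha> j t \<le> (\<Sum>i<K. \<nu> i t * \<alpha> i t)"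
    using j \<nu>_nonneg[OF _ t] \<alpha>_pos t by (intro member_le_sum) (auto simp: less_imp_le)
  moreover have "\<nu> j t * \<alpha> j t > 0" using \<nu>_pos \<alpha>_pos j t by simp
  ultimately show "alpha1 K p q \<alpha> t > 0" unfolding alpha1_def using nu1_pos by simp
qed

lemma deg_limit_eq_c_star_term:
  assumes t: "t < K"
  shows "deg_limit t k = (if p_star K p q t = 0 then (if k = 0 then p t else 0)
     else (let n = nu1 K p q \<alpha> t; a = alpha1 K p q \<alpha> t in
       p t / n * (Gamma (real k + a) * Gamma (1 / n + a))
         / (Gamma a * Gamma (real k + 1 + 1 / n + a))))"
proof (cases "pstar t = 0")
  case True
  then show ?thesis using jump_rate_eq_0[OF t] by (cases k) simp_all
next
  case False
  note pos = nu1_alpha1_pos[OF t False]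
  have "deg_limit t k = p t / nu1 K p q \<alpha> t
      * (Gamma (real k + alpha1 K p q \<alpha> t) * Gamma (1 / nu1 K p q \<alpha> t + alpha1 K p q \<alpha> t))
      / (Gamma (alpha1 K p q \<alpha> t) * Gamma (real k + 1 + 1 / nu1 K p q \<alpha> t + alpha1 K p q \<alpha> t))"
    unfolding Gamma_profile_def[symmetric] using pos
    by (intro Gamma_profile_solves_recurrence) (simp_all add: jump_rate_eq_affine)
  then show ?thesis using False by (simp add: Let_def)
qed

lemma c_star_eq_sum_deg_limit: "c_star K p q \<alpha> k = (\<Sum>t<K. deg_limit t k)"
  unfolding c_star_def by (intro sum.cong refl) (simp add: deg_limit_eq_c_star_term)

lemma deg_count_eq_sum_type_deg_count:
  assumes wf: "wf_state K n s"
  shows "real (deg_count k s) = (\<Sum>t<K. type_deg_count t k s)"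
proof -
  have "real (deg_count k s) = (\<Sum>w<length s. if outdeg s w = k then 1 else 0)"
    unfolding deg_count_def by (simp add: sum.If_cases Int_def conj_commute)
  also have "\<dots> = (\<Sum>w<length s. \<Sum>t<K. if vtype s w = t \<and> outdeg s w = k then 1 else 0)"
  proof (intro sum.cong refl)
    fix w assume "w \<in> {..<length s}"
    then have "vtype s w < K" using wf by (simp add: wf_state_def)
    then show "(if outdeg s w = k then 1 else 0)
        = (\<Sum>t<K. if vtype s w = t \<and> outdeg s w = k then 1 else (0::real))"
      by (simp add: sum.delta' conj_commute)
  qed
  also have "\<dots> = (\<Sum>t<K. type_deg_count t k s)"
    unfolding type_deg_count_def by (rule sum.swap)
  finally show ?thesis .
qed

lemma sublinear_deg_count_deviation:
  "sublinear (\<lambda>n. measure_pmf.expectation (tree n)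
     (\<lambda>s. \<bar>real (deg_count k s) - real n * c_star K p q \<alpha> k\<bar>))"
proof (rule sublinear_expectation_mono)
  show "sublinear (\<lambda>n. measure_pmf.expectation (tree n) (\<lambda>s. \<Sum>t<K. \<bar>deg_dev t k s\<bar>))"
    by (intro sublinear_expectation_sum sublinear_deg_dev) auto
  fix n s assume "n \<ge> K" "s \<in> set_pmf (tree n)"
  then have wf: "wf_state K n s" by (rule wf_state_tree)
  have "real (deg_count k s) - real n * c_star K p q \<alpha> k = (\<Sum>t<K. deg_dev t k s)"
    using wf unfolding deg_count_eq_sum_type_deg_count[OF wf] c_star_eq_sum_deg_limit
    by (simp add: deg_dev_def centred_def wf_state_def sum_subtractf sum_distrib_left)
  then show "\<bar>real (deg_count k s) - real n * c_star K p q \<alpha> k\<bar> \<le> (\<Sum>t<K. \<bar>deg_dev t k s\<bar>)"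
    by (simp add: sum_abs)
qed

end

text \<open>The hypotheses K \<ge> 2 and p_0 = max p_i only fix the paper's labelling of the types;
  the argument does not use them.\<close>

theorem theorem3p9:
  fixes K :: nat and p :: "nat \<Rightarrow> real" and q \<alpha> :: "nat \<Rightarrow> nat \<Rightarrow> real" and k :: nat
  assumes "K \<ge> 2"
    and "\<forall>i<K. p i \<ge> 0" and "(\<Sum>i<K. p i) = 1"
    and "p 0 > 0" and "\<forall>i<K. p i \<le> p 0"
    and "\<forall>i<K. \<forall>j<K. q i j \<ge> 0" and "\<forall>i<K. (\<Sum>j<K. q i j) = 1"
    and "\<forall>i<K. \<forall>j<K. \<alpha> i j > 0"
  shows "\<forall>\<epsilon>>0. (\<lambda>n. measure_pmf.prob (cmpa_tree K p q \<alpha> n)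
            {s. \<bar>real (deg_count k s) / real n - c_star K p q \<alpha> k\<bar> > \<epsilon>})
          \<longlonglongrightarrow> 0"
proof -
  interpret cmpa_model K p q \<alpha>
    using assms by unfold_locales auto
  show ?thesis
    using tendsto_prob_deviation_zero[where f = "\<lambda>_ s. real (deg_count k s)",
        OF sublinear_deg_count_deviation] by blast
qed

end
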